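(* Let $n\ge 1$ and let $L \subseteq \{0,1\}^n$ be a nonempty homogeneous language. Then every regular expression describing $L$ has length at least $\mathsf{Arith}(L)$, i.e. $\mathrm{rpn}(L) \geq \mathsf{Arith}(L)$.
   Context: Regular expressions over an alphabet $\Sigma$ are built from $\epsilon$ and letters $a\in\Sigma$ by union $+$, concatenation $\cdot$ and star; expressions are assumed not to contain the symbol $\emptyset$. The length $\mathrm{rpn}(R)$ of an expression $R$ is the number of nodes of its syntax tree, and for a regular language $L$, $\mathrm{rpn}(L)$ is the minimum length of an expression describing $L$. A language is homogeneous if all its words have the same length. A monotone arithmetic formula in variables $x_1,\dots,x_n$ is a rooted tree whose leaves hold a variable $x_i$ or a constant $c\in\mathbb{R}_{\ge 0}$ and whose inner nodes are addition or multiplication gates; its size is its number of nodes. It computes a polynomial $\sum_{a\in A} c_a\prod_{i=1}^n x_i^{a_i}$ with all $c_a>0$, and the finite set $A\subseteq\mathbb{N}^n$ of exponent vectors is called the set produced by the formula. For $A\subseteq \mathbb{N}^n$, $\mathsf{Arith}(A)$ is the minimum size of a monotone arithmetic formula producing exactly $A$ (coefficients are irrelevant). A word $w_1\cdots w_n\in\{0,1\}^n$ is identified with the vector $(w_1,\dots,w_n)$. *)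

theory Defs
  imports Complex_Main
begin

datatype 'a rexp = Eps | Lit 'a | Plus "'a rexp" "'a rexp"
  | Times "'a rexp" "'a rexp" | Star "'a rexp"

definition conc :: "'a list set \<Rightarrow> 'a list set \<Rightarrow> 'a list set" where
  "conc A B = {u @ v | u v. u \<in> A \<and> v \<in> B}"

inductive_set kstar :: "'a list set \<Rightarrow> 'a list set" for A where
  kstar_Nil: "[] \<in> kstar A"
| kstar_app: "u \<in> A \<Longrightarrow> v \<in> kstar A \<Longrightarrow> u @ v \<in> kstar A"

fun lang :: "'a rexp \<Rightarrow> 'a list set" where
  "lang Eps = {[]}"
| "lang (Lit a) = {[a]}"
| "lang (Plus r s) = lang r \<union> lang s"
| "lang (Times r s) = conc (lang r) (lang s)"
| "lang (Star r) = kstar (lang r)"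

fun rpn_size :: "'a rexp \<Rightarrow> nat" where
  "rpn_size Eps = 1"
| "rpn_size (Lit a) = 1"
| "rpn_size (Plus r s) = rpn_size r + rpn_size s + 1"
| "rpn_size (Times r s) = rpn_size r + rpn_size s + 1"
| "rpn_size (Star r) = rpn_size r + 1"

definition rpn :: "'a list set \<Rightarrow> nat" where
  "rpn L = (LEAST k. \<exists>r. lang r = L \<and> rpn_size r = k)"

text \<open>Variables x_1..x_n are represented by indices 0..n-1; exponent vectors in N^n
  are lists of naturals of length n.\<close>

datatype aformula = AVar nat | AConst real | AAdd aformula aformula | AMul aformula aformula

fun af_size :: "aformula \<Rightarrow> nat" where
  "af_size (AVar i) = 1"
| "af_size (AConst c) = 1"
| "af_size (AAdd f g) = af_size f + af_size g + 1"
| "af_size (AMul f g) = af_size f + af_size g + 1"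

fun af_wf :: "nat \<Rightarrow> aformula \<Rightarrow> bool" where
  "af_wf n (AVar i) = (i < n)"
| "af_wf n (AConst c) = (c \<ge> 0)"
| "af_wf n (AAdd f g) = (af_wf n f \<and> af_wf n g)"
| "af_wf n (AMul f g) = (af_wf n f \<and> af_wf n g)"

text \<open>The computed polynomial, given by its coefficient function on exponent vectors.\<close>
fun af_coeff :: "nat \<Rightarrow> aformula \<Rightarrow> nat list \<Rightarrow> real" where
  "af_coeff n (AVar i) e = (if e = (replicate n 0)[i := 1] then 1 else 0)"
| "af_coeff n (AConst c) e = (if e = replicate n 0 then c else 0)"
| "af_coeff n (AAdd f g) e = af_coeff n f e + af_coeff n g e"
| "af_coeff n (AMul f g) e =
     (\<Sum>(a, b) \<in> {(a, b). length a = n \<and> length b = n \<and> map2 (+) a b = e}.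
        af_coeff n f a * af_coeff n g b)"

definition produced :: "nat \<Rightarrow> aformula \<Rightarrow> nat list set" where
  "produced n f = {e. length e = n \<and> af_coeff n f e \<noteq> 0}"

definition Arith :: "nat \<Rightarrow> nat list set \<Rightarrow> nat" where
  "Arith n A = (LEAST k. \<exists>f. af_wf n f \<and> produced n f = A \<and> af_size f = k)"

end

theory Submission
  imports Defs
begin

(* A regular expression for a homogeneous language of 0/1-words is read as a monotone formula:
  a letter at position i becomes x_i if it is 1 and the constant 1 if it is 0, union becomes
  addition, concatenation multiplication, and a star the constant 1, since the star of a
  language is homogeneous only if it is {\<epsilon>}. The position of each letter is determined
  syntactically, because both factors of a homogeneous concatenation are homogeneous. No node
  is added, and since a monotone formula cannot cancel monomials, the formula produces exactly
  the exponent vectors of the words of the language. *)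

definition homogeneous :: "nat \<Rightarrow> 'a list set \<Rightarrow> bool" where
  "homogeneous k A \<longleftrightarrow> (\<forall>w\<in>A. length w = k)"

lemma homogeneous_conc_factors:
  assumes "homogeneous k (conc A B)" "u \<in> A" "v \<in> B"
  shows "homogeneous (length u) A" "homogeneous (length v) B" "k = length u + length v"
proof -
  have len: "length x + length y = k" if "x \<in> A" "y \<in> B" for x y
    using assms(1) that by (force simp: homogeneous_def conc_def)
  show "k = length u + length v"
    using len[OF assms(2,3)] by simp
  show "homogeneous (length u) A"
    using len[OF _ assms(3)] len[OF assms(2,3)] by (metis add_right_cancel homogeneous_def)
  show "homogeneous (length v) B"
    using len[OF assms(2)] len[OF assms(2,3)] by (metis add_left_cancel homogeneous_def)
qed

lemma lists_conc_factors:
  assumes "conc A B \<subseteq> lists S" "A \<noteq> {}" "B \<noteq> {}"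
  shows "A \<subseteq> lists S" "B \<subseteq> lists S"
  using assms by (fastforce simp: conc_def)+

lemma homogeneous_kstar:
  assumes "homogeneous k (kstar A)"
  shows "kstar A = {[]}"
proof -
  have A_Nil: "u = []" if "u \<in> A" for u
  proof -
    have "u \<in> kstar A" "u @ u \<in> kstar A"
      using kstar_app[OF that kstar_Nil] kstar_app[OF that kstar_app[OF that kstar_Nil]] by simp_all
    then have "length u = k" "length (u @ u) = k"
      using assms unfolding homogeneous_def by blast+
    then show ?thesis
      by simp
  qed
  have "w = []" if "w \<in> kstar A" for w
    using that by induction (simp_all add: A_Nil)
  then show ?thesis
    by (blast intro: kstar.intros)
qed

fun witness_length :: "'a rexp \<Rightarrow> nat" where
  "witness_length Eps = 0"
| "witness_length (Lit a) = 1"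
| "witness_length (Plus r s) = witness_length r"
| "witness_length (Times r s) = witness_length r + witness_length s"
| "witness_length (Star r) = 0"

lemma witness_length_in_lang: "\<exists>w \<in> lang r. length w = witness_length r"
proof (induction r)
  case (Times r s)
  then obtain u v where "u \<in> lang r" "length u = witness_length r"
    and "v \<in> lang s" "length v = witness_length s"
    by auto
  then have "u @ v \<in> lang (Times r s)"
    by (auto simp: conc_def)
  then show ?case
    using \<open>length u = witness_length r\<close> \<open>length v = witness_length s\<close> by force
qed (auto intro: kstar.intros)

lemma homogeneous_Times:
  assumes "homogeneous k (lang (Times r s))"
  shows "homogeneous (witness_length r) (lang r)" "homogeneous (witness_length s) (lang s)"
    and "k = witness_length r + witness_length s"
proof -
  obtain u v where "u \<in> lang r" "length u = witness_length r"
    and "v \<in> lang s" "length v = witness_length s"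
    using witness_length_in_lang by blast
  then show "homogeneous (witness_length r) (lang r)" "homogeneous (witness_length s) (lang s)"
      "k = witness_length r + witness_length s"
    using homogeneous_conc_factors[of k "lang r" "lang s" u v] assms by simp_all
qed

lemma lists_Times:
  assumes "lang (Times r s) \<subseteq> lists S"
  shows "lang r \<subseteq> lists S" "lang s \<subseteq> lists S"
  using lists_conc_factors[of "lang r" "lang s" S] witness_length_in_lang[of r]
    witness_length_in_lang[of s] assms
  by auto

lemma af_coeff_nonneg: "af_wf n f \<Longrightarrow> 0 \<le> af_coeff n f e"
  by (induction f arbitrary: e) (auto intro!: sum_nonneg mult_nonneg_nonneg)

lemma finite_map2_plus_preimage:
  "finite {(a, b). length a = n \<and> length b = n \<and> map2 (+) a b = (e :: nat list)}"
proof -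
  let ?B = "{xs. set xs \<subseteq> {..sum_list e} \<and> length xs = n}"
  have "a ! i \<le> sum_list e \<and> b ! i \<le> sum_list e"
    if "length a = n" "length b = n" "map2 (+) a b = e" "i < n" for a b i
  proof -
    have "e ! i = a ! i + b ! i" "i < length e"
      using that by auto
    then show ?thesis
      using elem_le_sum_list[of i e] by linarith
  qed
  then have "{(a, b). length a = n \<and> length b = n \<and> map2 (+) a b = e} \<subseteq> ?B \<times> ?B"
    by (fastforce simp: in_set_conv_nth)
  moreover have "finite ?B"
    by (rule finite_lists_length_eq) simp
  ultimately show ?thesis
    by (meson finite_SigmaI finite_subset)
qed

lemma produced_AConst: "c > 0 \<Longrightarrow> produced n (AConst c) = {replicate n 0}"
  by (auto simp: produced_def)

lemma produced_AVar: "i < n \<Longrightarrow> produced n (AVar i) = {(replicate n 0)[i := 1]}"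
  by (auto simp: produced_def)

lemma produced_AAdd:
  assumes "af_wf n f" "af_wf n g"
  shows "produced n (AAdd f g) = produced n f \<union> produced n g"
  using af_coeff_nonneg[OF assms(1)] af_coeff_nonneg[OF assms(2)]
  by (auto simp: produced_def add_nonneg_eq_0_iff)

lemma produced_AMul:
  assumes "af_wf n f" "af_wf n g"
  shows "produced n (AMul f g) = {map2 (+) a b | a b. a \<in> produced n f \<and> b \<in> produced n g}"
proof -
  let ?P = "\<lambda>e. {(a, b). length a = n \<and> length b = n \<and> map2 (+) a b = e}"
  have coeff_nonzero_iff: "af_coeff n (AMul f g) e \<noteq> 0 \<longleftrightarrow>
      (\<exists>(a, b) \<in> ?P e. af_coeff n f a \<noteq> 0 \<and> af_coeff n g b \<noteq> 0)" for e
  proof -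
    have "af_coeff n (AMul f g) e = 0 \<longleftrightarrow>
        (\<forall>(a, b) \<in> ?P e. af_coeff n f a * af_coeff n g b = 0)"
      using sum_nonneg_eq_0_iff[OF finite_map2_plus_preimage, of n e
          "\<lambda>(a, b). af_coeff n f a * af_coeff n g b"]
        af_coeff_nonneg[OF assms(1)] af_coeff_nonneg[OF assms(2)]
      by (simp add: case_prod_unfold)
    then show ?thesis
      by auto
  qed
  show ?thesis
  proof (intro equalityI subsetI)
    fix e
    assume "e \<in> produced n (AMul f g)"
    then obtain a b where "length a = n" "length b = n" "map2 (+) a b = e"
      and "af_coeff n f a \<noteq> 0" "af_coeff n g b \<noteq> 0"
      using coeff_nonzero_iff by (auto simp: produced_def)
    then show "e \<in> {map2 (+) a b | a b. a \<in> produced n f \<and> b \<in> produced n g}"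
      unfolding produced_def by blast
  next
    fix e
    assume "e \<in> {map2 (+) a b | a b. a \<in> produced n f \<and> b \<in> produced n g}"
    then obtain a b where "e = map2 (+) a b" "a \<in> produced n f" "b \<in> produced n g"
      by blast
    then have "length e = n" "(a, b) \<in> ?P e" "af_coeff n f a \<noteq> 0" "af_coeff n g b \<noteq> 0"
      by (simp_all add: produced_def)
    then show "e \<in> produced n (AMul f g)"
      using coeff_nonzero_iff unfolding produced_def by blast
  qed
qed

definition embed_word :: "nat \<Rightarrow> nat \<Rightarrow> nat list \<Rightarrow> nat list" where
  "embed_word n p w = map (\<lambda>i. if p \<le> i \<and> i < p + length w then w ! (i - p) else 0) [0..<n]"

lemma length_embed_word [simp]: "length (embed_word n p w) = n"
  by (simp add: embed_word_def)

lemma nth_embed_word: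
  "i < n \<Longrightarrow> embed_word n p w ! i = (if p \<le> i \<and> i < p + length w then w ! (i - p) else 0)"
  by (simp add: embed_word_def)

lemma embed_word_Nil: "embed_word n p [] = replicate n 0"
  by (rule nth_equalityI) (auto simp: embed_word_def)

lemma embed_word_zero: "embed_word n p [0] = replicate n 0"
  by (rule nth_equalityI) (auto simp: embed_word_def)

lemma embed_word_one: "p < n \<Longrightarrow> embed_word n p [1] = (replicate n 0)[p := 1]"
  by (rule nth_equalityI) (auto simp: embed_word_def nth_list_update)

lemma embed_word_full: "length w = n \<Longrightarrow> embed_word n 0 w = w"
  by (rule nth_equalityI) (auto simp: embed_word_def)

lemma embed_word_append:
  assumes "p + length u + length v \<le> n"
  shows "map2 (+) (embed_word n p u) (embed_word n (p + length u) v) = embed_word n p (u @ v)"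
  by (rule nth_equalityI) (use assms in \<open>auto simp: nth_embed_word nth_append\<close>)

lemma embed_word_conc:
  assumes "homogeneous k A" "homogeneous m B" "p + k + m \<le> n"
  shows "{map2 (+) a b | a b. a \<in> embed_word n p ` A \<and> b \<in> embed_word n (p + k) ` B}
    = embed_word n p ` conc A B"
proof -
  have "map2 (+) (embed_word n p u) (embed_word n (p + k) v) = embed_word n p (u @ v)"
    if "u \<in> A" "v \<in> B" for u v
    using that assms embed_word_append[of p u v n] by (simp add: homogeneous_def)
  then show ?thesis
    by (auto simp: conc_def) (metis imageI)
qed

fun formula_of_rexp :: "nat \<Rightarrow> nat rexp \<Rightarrow> aformula" where
  "formula_of_rexp p Eps = AConst 1"
| "formula_of_rexp p (Lit a) = (if a = 0 then AConst 1 else AVar p)"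
| "formula_of_rexp p (Plus r s) = AAdd (formula_of_rexp p r) (formula_of_rexp p s)"
| "formula_of_rexp p (Times r s) =
     AMul (formula_of_rexp p r) (formula_of_rexp (p + witness_length r) s)"
| "formula_of_rexp p (Star r) = AConst 1"

lemma af_size_formula_of_rexp: "af_size (formula_of_rexp p r) \<le> rpn_size r"
  by (induction r arbitrary: p) (auto intro: add_mono)

lemma af_wf_formula_of_rexp:
  assumes "homogeneous k (lang r)" "p + k \<le> n"
  shows "af_wf n (formula_of_rexp p r)"
  using assms
proof (induction r arbitrary: p k)
  case (Plus r s)
  then have "homogeneous k (lang r)" "homogeneous k (lang s)"
    by (auto simp: homogeneous_def)
  with Plus show ?case
    by simp
next
  case (Times r s)
  then show ?case
    using homogeneous_Times[OF Times.prems(1)] by simp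
qed (auto simp: homogeneous_def)

lemma produced_formula_of_rexp:
  assumes "homogeneous k (lang r)" "lang r \<subseteq> lists {0, 1}" "p + k \<le> n"
  shows "produced n (formula_of_rexp p r) = embed_word n p ` lang r"
  using assms
proof (induction r arbitrary: p k)
  case Eps
  then show ?case
    by (simp add: produced_AConst embed_word_Nil)
next
  case (Lit a)
  then show ?case
    by (auto simp: homogeneous_def produced_AConst produced_AVar embed_word_zero
        embed_word_one[simplified])
next
  case (Plus r s)
  then have "homogeneous k (lang r)" "homogeneous k (lang s)"
    by (auto simp: homogeneous_def)
  with Plus show ?case
    by (simp add: produced_AAdd af_wf_formula_of_rexp image_Un)
next
  case (Times r s)
  note hom = homogeneous_Times[OF Times.prems(1)] and bin = lists_Times[OF Times.prems(2)]
  show ?case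
    using Times.IH(1)[OF hom(1) bin(1)] Times.IH(2)[OF hom(2) bin(2)] Times.prems(3)
      embed_word_conc[OF hom(1,2)]
    by (simp add: hom(3) produced_AMul af_wf_formula_of_rexp[OF hom(1)]
        af_wf_formula_of_rexp[OF hom(2)])
next
  case (Star r)
  then show ?case
    by (simp add: homogeneous_kstar produced_AConst embed_word_Nil)
qed

lemma Arith_le_rpn_size:
  fixes r :: "nat rexp"
  assumes "lang r \<subseteq> {w. length w = n \<and> set w \<subseteq> {0, 1}}"
  shows "Arith n (lang r) \<le> rpn_size r"
proof -
  have hom: "homogeneous n (lang r)" and bin: "lang r \<subseteq> lists {0, 1}"
    using assms by (auto simp: homogeneous_def)
  have wf: "af_wf n (formula_of_rexp 0 r)"
    using af_wf_formula_of_rexp[OF hom, of 0] by simp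
  have "embed_word n 0 w = w" if "w \<in> lang r" for w
    using assms that by (auto intro: embed_word_full)
  then have "embed_word n 0 ` lang r = lang r"
    by simp
  then have "produced n (formula_of_rexp 0 r) = lang r"
    using produced_formula_of_rexp[OF hom bin, of 0] by simp
  then have "Arith n (lang r) \<le> af_size (formula_of_rexp 0 r)"
    unfolding Arith_def using wf by (intro Least_le) blast
  also have "\<dots> \<le> rpn_size r"
    by (rule af_size_formula_of_rexp)
  finally show ?thesis .
qed

fun rexp_of_word :: "'a list \<Rightarrow> 'a rexp" where
  "rexp_of_word [] = Eps"
| "rexp_of_word (a # w) = Times (Lit a) (rexp_of_word w)"

lemma lang_rexp_of_word: "lang (rexp_of_word w) = {w}"
  by (induction w) (auto simp: conc_def)

lemma finite_lang_rexp:
  assumes "finite A" "A \<noteq> {}"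
  shows "\<exists>r. lang r = A"
  using assms
proof (induction A rule: finite_ne_induct)
  case (singleton w)
  show ?case
    using lang_rexp_of_word by blast
next
  case (insert w A)
  then obtain r where "lang r = A"
    by blast
  then have "lang (Plus (rexp_of_word w) r) = insert w A"
    by (simp add: lang_rexp_of_word)
  then show ?case
    by blast
qed

lemma rpn_attained:
  assumes "lang r = L"
  shows "\<exists>r'. lang r' = L \<and> rpn_size r' = rpn L"
  unfolding rpn_def by (rule LeastI_ex) (use assms in blast)

theorem theorem4p2:
  fixes n :: nat and L :: "nat list set"
  assumes "n \<ge> 1"
    and "L \<noteq> {}"
    and "L \<subseteq> {w. length w = n \<and> set w \<subseteq> {0, 1}}"
  shows "(\<forall>r :: nat rexp. lang r = L \<longrightarrow> Arith n L \<le> rpn_size r) \<and> rpn L \<ge> Arith n L"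
proof -
  have lower_bound: "Arith n L \<le> rpn_size r" if "lang r = L" for r :: "nat rexp"
    using Arith_le_rpn_size[of r n] that assms(3) by simp
  have "finite {w :: nat list. length w = n \<and> set w \<subseteq> {0, 1}}"
    using finite_lists_length_eq[of "{0 :: nat, 1}" n] by (simp add: conj_commute)
  then have "finite L"
    using assms(3) by (rule finite_subset[rotated])
  then obtain r :: "nat rexp" where "lang r = L"
    using finite_lang_rexp assms(2) by blast
  then obtain r' :: "nat rexp" where "lang r' = L" "rpn_size r' = rpn L"
    using rpn_attained by blast
  then show ?thesis
    using lower_bound by metis
qed

end
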